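(* Let $G$ be an ordered graph and let $H$ be a spanning subgraph of $G$ (with the orders inherited from $G$). Then for every edge $e\in E(H)$ we have $\mathrm{ht}_H(e)\preceq_{\mathrm{lex}}\mathrm{ht}_G(e)$.
   Context: An ordered graph is a finite simple graph $G$ equipped with a total order $\le_G$ on $E(G)$ and a total order $\le^V_G$ on $V(G)$. Let $\mathbb N=\{1,2,\dots\}$. Define $\preceq_{\mathrm{lex}}$ on $\mathbb N\times V(G)$ by $(i,v)\preceq_{\mathrm{lex}}(i',v')$ iff $i<i'$, or $i=i'$ and $v\le^V_G v'$. The height table $\mathrm{HT}(G)$ is a partially filled array indexed by $\mathbb N\times V(G)$, built by going through all $(i,v)$ in $\preceq_{\mathrm{lex}}$-increasing order and setting the entry at $(i,v)$ to be the $\le_G$-largest edge containing $v$ not yet entered into the table (blank if none remain). Every edge is entered exactly once; $\mathrm{ht}_G(e)$ denotes the position (row, column) of $e$ in $\mathrm{HT}(G)$. *)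

theory Defs
  imports Main
begin

text \<open>The vertex order is the linear order of the vertex type 'v; the edge order is a
  relation r (as a set of pairs) which must be a linear order on E.\<close>

definition simple_graph :: "'v set \<Rightarrow> 'v set set \<Rightarrow> bool" where
  "simple_graph V E \<longleftrightarrow> finite V \<and> (\<forall>e\<in>E. \<exists>u w. u \<in> V \<and> w \<in> V \<and> u \<noteq> w \<and> e = {u, w})"

definition lex_le :: "nat \<times> 'v::linorder \<Rightarrow> nat \<times> 'v \<Rightarrow> bool" where
  "lex_le p q \<longleftrightarrow> fst p < fst q \<or> (fst p = fst q \<and> snd p \<le> snd q)"

definition max_edge :: "('v set \<times> 'v set) set \<Rightarrow> 'v set set \<Rightarrow> 'v \<Rightarrow> 'v set" where
  "max_edge r R v = (THE e. e \<in> R \<and> v \<in> e \<and> (\<forall>f\<in>R. v \<in> f \<longrightarrow> (f, e) \<in> r))"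

text \<open>Filling row i of the height table: go through the vertices in order; R is the set of
  edges not yet entered, P records the position of each entered edge.\<close>
fun ht_row :: "('v set \<times> 'v set) set \<Rightarrow> nat \<Rightarrow> 'v list \<Rightarrow> 'v set set \<Rightarrow> ('v set \<Rightarrow> (nat \<times> 'v) option)
    \<Rightarrow> 'v set set \<times> ('v set \<Rightarrow> (nat \<times> 'v) option)" where
  "ht_row r i [] R P = (R, P)"
| "ht_row r i (v # vs) R P =
     (if \<exists>e\<in>R. v \<in> e
      then (let e = max_edge r R v in ht_row r i vs (R - {e}) (P(e \<mapsto> (i, v))))
      else ht_row r i vs R P)"

fun ht_rows :: "('v set \<times> 'v set) set \<Rightarrow> 'v list \<Rightarrow> nat \<Rightarrow> 'v set set \<Rightarrow> ('v set \<Rightarrow> (nat \<times> 'v) option)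
    \<Rightarrow> 'v set set \<times> ('v set \<Rightarrow> (nat \<times> 'v) option)" where
  "ht_rows r vs 0 R P = (R, P)"
| "ht_rows r vs (Suc n) R P = (case ht_rows r vs n R P of (R', P') \<Rightarrow> ht_row r (Suc n) vs R' P')"

text \<open>Position of edge e in the height table HT(G) of G = (V, E) with edge order r.
  Every row with remaining edges enters at least one edge, so card E rows suffice;
  all later rows are blank.\<close>
definition ht :: "'v::linorder set \<Rightarrow> 'v set set \<Rightarrow> ('v set \<times> 'v set) set \<Rightarrow> 'v set \<Rightarrow> nat \<times> 'v" where
  "ht V E r e = the (snd (ht_rows r (sorted_list_of_set V) (card E) E Map.empty) e)"

end

theory Submission
  imports Defs
begin

text \<open>Fill both tables HT(G) and HT(H) simultaneously, position by position. At every moment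
  the edges of H still missing from HT(H) are also missing from HT(G): if G enters an edge g
  at (i, v) that H still lacks, then g is also the largest remaining H-edge at v, so H
  enters it there too. Hence each edge of H is entered into HT(H) no later than into HT(G).\<close>

type_synonym 'v ht_state = "'v set set \<times> ('v set \<Rightarrow> (nat \<times> 'v) option)"

lemma lex_le_refl: "lex_le p p"
  unfolding lex_le_def by auto

lemma lex_le_trans: "lex_le p q \<Longrightarrow> lex_le q s \<Longrightarrow> lex_le p s"
  unfolding lex_le_def by auto

lemma linear_order_on_finite_has_greatest:
  assumes lin: "linear_order_on E r" and "finite S" "S \<noteq> {}" "S \<subseteq> E"
  shows "\<exists>m\<in>S. \<forall>f\<in>S. (f, m) \<in> r"
  using assms(2-4)
proof (induction S rule: finite_ne_induct)
  case (singleton x)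
  then show ?case
    using lin by (auto simp: order_on_defs refl_on_def)
next
  case (insert x F)
  then obtain m where m: "m \<in> F" "\<forall>f\<in>F. (f, m) \<in> r" by auto
  have "x \<in> E" "m \<in> E" using insert m by auto
  then have "(x, m) \<in> r \<or> (m, x) \<in> r"
    using lin by (cases "x = m") (auto simp: order_on_defs refl_on_def total_on_def)
  then show ?case
  proof
    assume "(x, m) \<in> r"
    then show ?thesis using m by auto
  next
    assume "(m, x) \<in> r"
    then have "\<forall>f\<in>insert x F. (f, x) \<in> r"
      using m lin \<open>x \<in> E\<close> by (auto simp: order_on_defs refl_on_def dest: transD)
    then show ?thesis by auto
  qed
qed

lemma max_edge_eqI:
  assumes lin: "linear_order_on E r" and "R \<subseteq> E" "m \<in> R" "v \<in> m"
    and greatest: "\<forall>f\<in>R. v \<in> f \<longrightarrow> (f, m) \<in> r"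
  shows "max_edge r R v = m"
  unfolding max_edge_def
proof (rule the_equality)
  fix e assume "e \<in> R \<and> v \<in> e \<and> (\<forall>f\<in>R. v \<in> f \<longrightarrow> (f, e) \<in> r)"
  then show "e = m"
    using assms lin by (auto simp: order_on_defs dest: antisymD)
qed (use assms in auto)

lemma max_edge_greatest:
  assumes lin: "linear_order_on E r" and "finite E" "R \<subseteq> E" "\<exists>e\<in>R. v \<in> e"
  shows "max_edge r R v \<in> R" "v \<in> max_edge r R v"
    "\<forall>f\<in>R. v \<in> f \<longrightarrow> (f, max_edge r R v) \<in> r"
proof -
  have "finite {f\<in>R. v \<in> f}" using assms(2,3) by (simp add: finite_subset)
  then obtain m where m: "m \<in> R" "v \<in> m" "\<forall>f\<in>R. v \<in> f \<longrightarrow> (f, m) \<in> r"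
    using linear_order_on_finite_has_greatest[OF lin, of "{f\<in>R. v \<in> f}"] assms(3,4) by auto
  moreover have "max_edge r R v = m" using max_edge_eqI[OF lin assms(3) m] .
  ultimately show "max_edge r R v \<in> R" "v \<in> max_edge r R v"
    "\<forall>f\<in>R. v \<in> f \<longrightarrow> (f, max_edge r R v) \<in> r" by simp_all
qed

lemma max_edge_restrict_order:
  assumes "R \<subseteq> EH"
  shows "max_edge (r \<inter> (EH \<times> EH)) R v = max_edge r R v"
proof -
  have "(\<lambda>e. e \<in> R \<and> v \<in> e \<and> (\<forall>f\<in>R. v \<in> f \<longrightarrow> (f, e) \<in> r \<inter> (EH \<times> EH))) =
        (\<lambda>e. e \<in> R \<and> v \<in> e \<and> (\<forall>f\<in>R. v \<in> f \<longrightarrow> (f, e) \<in> r))"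
    using assms by blast
  then show ?thesis unfolding max_edge_def by simp
qed

definition fill_step :: "('v set \<times> 'v set) set \<Rightarrow> nat \<Rightarrow> 'v \<Rightarrow> 'v ht_state \<Rightarrow> 'v ht_state" where
  "fill_step r i v = (\<lambda>(R, P).
     if \<exists>e\<in>R. v \<in> e then (R - {max_edge r R v}, P(max_edge r R v \<mapsto> (i, v))) else (R, P))"

lemma ht_row_eq_fold: "ht_row r i vs R P = fold (fill_step r i) vs (R, P)"
  by (induction vs arbitrary: R P) (simp_all add: fill_step_def Let_def)

lemma ht_rows_Suc: "ht_rows r vs (Suc n) R P = fold (fill_step r (Suc n)) vs (ht_rows r vs n R P)"
  by (simp add: ht_row_eq_fold split: prod.split)

declare ht_rows.simps(2) [simp del]

lemma fold_fill_step_empty: "fold (fill_step r i) vs ({}, P) = ({}, P)"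
  by (induction vs) (simp_all add: fill_step_def)

lemma fill_step_subset: "fst (fill_step r i v S) \<subseteq> fst S"
  by (auto simp: fill_step_def split: prod.split)

lemma fold_fill_step_subset: "fst (fold (fill_step r i) vs S) \<subseteq> fst S"
proof (induction vs arbitrary: S)
  case (Cons v vs)
  then show ?case using fill_step_subset[of r i v S] by (metis fold_Cons comp_apply order_trans)
qed simp

lemma ht_rows_subset: "fst (ht_rows r vs n R P) \<subseteq> R"
proof (induction n)
  case (Suc n)
  have "fst (ht_rows r vs (Suc n) R P) \<subseteq> fst (ht_rows r vs n R P)"
    unfolding ht_rows_Suc by (rule fold_fill_step_subset)
  then show ?case using Suc by blast
qed simp

lemma ht_rows_Suc_exhausted:
  assumes "fst (ht_rows r vs n R P) = {}"
  shows "ht_rows r vs (Suc n) R P = ht_rows r vs n R P"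
proof -
  obtain P' where "ht_rows r vs n R P = ({}, P')"
    using assms by (cases "ht_rows r vs n R P") simp
  then show ?thesis by (simp only: ht_rows_Suc fold_fill_step_empty)
qed

lemma fill_step_assigns:
  assumes "linear_order_on E r" "finite E" "R \<subseteq> E" "fill_step r i v (R, P) = (R', P')"
  shows "P' = (\<lambda>f. if f \<in> R - R' then Some (i, v) else P f)"
proof (cases "\<exists>e\<in>R. v \<in> e")
  case True
  then have "max_edge r R v \<in> R" using max_edge_greatest(1)[OF assms(1-3)] by simp
  then show ?thesis using True assms(4) by (auto simp: fill_step_def)
next
  case False
  then show ?thesis using assms(4) by (auto simp: fill_step_def)
qed

lemma fold_fill_step_psubset:
  assumes "linear_order_on E r" "finite E" "fst S \<subseteq> E" "\<exists>e\<in>fst S. e \<inter> set vs \<noteq> {}"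
  shows "fst (fold (fill_step r i) vs S) \<subset> fst S"
  using assms(3,4)
proof (induction vs arbitrary: S)
  case (Cons v vs)
  obtain R P where S: "S = (R, P)" by force
  show ?case
  proof (cases "\<exists>e\<in>R. v \<in> e")
    case True
    then have "max_edge r R v \<in> R" using max_edge_greatest(1)[OF assms(1,2)] Cons(2) S by simp
    then have "fst (fill_step r i v S) \<subset> fst S" using True S by (auto simp: fill_step_def)
    moreover have "fst (fold (fill_step r i) (v # vs) S) \<subseteq> fst (fill_step r i v S)"
      by (simp add: fold_fill_step_subset)
    ultimately show ?thesis by (rule subset_psubset_trans[rotated])
  next
    case False
    then have "fill_step r i v S = S" using S by (simp add: fill_step_def)
    moreover have "\<exists>e\<in>fst S. e \<inter> set vs \<noteq> {}" using Cons(3) False S by auto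
    ultimately show ?thesis using Cons.IH[OF Cons(2)] by simp
  qed
qed simp

text \<open>Every row that starts with a remaining edge enters at least one edge.\<close>

lemma ht_rows_card_remaining:
  assumes "linear_order_on E r" "finite E" "R \<subseteq> E" "\<forall>e\<in>R. e \<inter> set vs \<noteq> {}"
  shows "card (fst (ht_rows r vs n R P)) \<le> card R - n"
proof (induction n)
  case (Suc n)
  let ?R' = "fst (ht_rows r vs n R P)"
  have "?R' \<subseteq> E" using ht_rows_subset[of r vs n R P] assms(3) by (rule order_trans)
  show ?case
  proof (cases "?R' = {}")
    case True
    then show ?thesis by (simp only: ht_rows_Suc_exhausted card.empty zero_le)
  next
    case False
    then obtain f where f: "f \<in> ?R'" by blast
    have "f \<inter> set vs \<noteq> {}" using assms(4) subsetD[OF ht_rows_subset f] by (rule bspec)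
    with f have "\<exists>e\<in>?R'. e \<inter> set vs \<noteq> {}" by (rule bexI[rotated])
    then have "fst (ht_rows r vs (Suc n) R P) \<subset> ?R'"
      unfolding ht_rows_Suc by (rule fold_fill_step_psubset[OF assms(1,2) \<open>?R' \<subseteq> E\<close>])
    moreover have "finite ?R'" using \<open>?R' \<subseteq> E\<close> assms(2) by (rule finite_subset)
    ultimately have "card (fst (ht_rows r vs (Suc n) R P)) < card ?R'"
      by (simp add: psubset_card_mono)
    then show ?thesis using Suc by linarith
  qed
qed simp

lemma ht_rows_exhausted:
  assumes "linear_order_on E r" "finite E" "R \<subseteq> E" "\<forall>e\<in>R. e \<inter> set vs \<noteq> {}"
  shows "fst (ht_rows r vs (card R) R P) = {}"
proof -
  have "finite (fst (ht_rows r vs (card R) R P))"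
    using ht_rows_subset assms(2,3) by (metis finite_subset)
  then show ?thesis using ht_rows_card_remaining[OF assms, of "card R" P] by simp
qed

lemma ht_rows_stable:
  assumes "fst (ht_rows r vs m R P) = {}" "m \<le> n"
  shows "ht_rows r vs n R P = ht_rows r vs m R P"
  using assms(2)
proof (induction n rule: dec_induct)
  case (step k)
  then have "fst (ht_rows r vs k R P) = {}" using assms(1) by simp
  then show ?case using step.IH by (simp only: ht_rows_Suc_exhausted)
qed simp

lemma ht_rows_card_le_stable:
  assumes "linear_order_on E r" "finite E" "R \<subseteq> E" "\<forall>e\<in>R. e \<inter> set vs \<noteq> {}" "card R \<le> n"
  shows "ht_rows r vs n R P = ht_rows r vs (card R) R P"
  using ht_rows_stable[OF ht_rows_exhausted[OF assms(1-4)] assms(5)] .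

lemma fold_fill_step_restrict_order:
  "fst S \<subseteq> EH \<Longrightarrow> fold (fill_step (r \<inter> (EH \<times> EH)) i) vs S = fold (fill_step r i) vs S"
proof (induction vs arbitrary: S)
  case (Cons v vs)
  have "fill_step (r \<inter> (EH \<times> EH)) i v S = fill_step r i v S"
    using Cons(2) by (auto simp: fill_step_def max_edge_restrict_order split: prod.split)
  then show ?case using Cons fill_step_subset[of r i v S] by auto
qed simp

lemma ht_rows_restrict_order:
  "R \<subseteq> EH \<Longrightarrow> ht_rows (r \<inter> (EH \<times> EH)) vs n R P = ht_rows r vs n R P"
proof (induction n)
  case (Suc n)
  have "fst (ht_rows r vs n R P) \<subseteq> EH" using ht_rows_subset[of r vs n R P] Suc.prems by (rule order_trans)
  then show ?case using Suc by (simp only: ht_rows_Suc fold_fill_step_restrict_order)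
qed simp

text \<open>The invariant of the simultaneous filling: SG is the state (remaining edges, positions
  entered so far) of HT(G), SH that of HT(H), and c the position filled last.\<close>

definition ht_dominated :: "'v set set \<Rightarrow> nat \<times> 'v::linorder \<Rightarrow> 'v ht_state \<Rightarrow> 'v ht_state \<Rightarrow> bool" where
  "ht_dominated EH c SG SH \<longleftrightarrow> fst SH \<subseteq> fst SG \<and>
     (\<forall>f\<in>EH - fst SG. \<exists>p q. snd SG f = Some p \<and> snd SH f = Some q \<and> lex_le q p) \<and>
     (\<forall>f\<in>EH - fst SH. \<exists>q. snd SH f = Some q \<and> lex_le q c)"

lemma fill_step_remaining_mono:
  assumes lin: "linear_order_on E r" and "finite E" "RG \<subseteq> E" "RH \<subseteq> RG"
  shows "fst (fill_step r i v (RH, PH)) \<subseteq> fst (fill_step r i v (RG, PG))"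
proof (cases "\<exists>e\<in>RG. v \<in> e")
  case True
  let ?g = "max_edge r RG v"
  have g: "?g \<in> RG" "v \<in> ?g" "\<forall>f\<in>RG. v \<in> f \<longrightarrow> (f, ?g) \<in> r"
    using max_edge_greatest[OF assms(1-3) True] by simp_all
  have G: "fst (fill_step r i v (RG, PG)) = RG - {?g}"
    using True by (simp add: fill_step_def)
  show ?thesis
  proof (cases "?g \<in> RH")
    case True
    have "\<forall>f\<in>RH. v \<in> f \<longrightarrow> (f, ?g) \<in> r" using g(3) assms(4) by blast
    then have "max_edge r RH v = ?g"
      using max_edge_eqI[OF lin _ True g(2)] assms(3,4) by (meson order_trans)
    moreover have "\<exists>e\<in>RH. v \<in> e" using True g(2) by (rule bexI[rotated])
    ultimately have "fst (fill_step r i v (RH, PH)) = RH - {?g}" by (simp add: fill_step_def)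
    then show ?thesis using G assms(4) by blast
  next
    case False
    then have "RH \<subseteq> RG - {?g}" using assms(4) by blast
    then show ?thesis using G fill_step_subset[of r i v "(RH, PH)"] by simp
  qed
next
  case False
  then have "\<not> (\<exists>e\<in>RH. v \<in> e)" using assms(4) by blast
  then show ?thesis using False assms(4) by (simp add: fill_step_def)
qed

lemma fill_step_dominated:
  assumes lin: "linear_order_on E r" and fin: "finite E" and "fst SG \<subseteq> E"
    and inv: "ht_dominated EH c SG SH" and "lex_le c (i, v)"
  shows "ht_dominated EH (i, v) (fill_step r i v SG) (fill_step r i v SH)"
proof -
  obtain RG PG RH PH where SG: "SG = (RG, PG)" and SH: "SH = (RH, PH)" by force
  obtain RG' PG' RH' PH' where
    G': "fill_step r i v (RG, PG) = (RG', PG')" and H': "fill_step r i v (RH, PH) = (RH', PH')" by force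
  have "RH \<subseteq> RG"
    and inv_G: "\<forall>f\<in>EH - RG. \<exists>p q. PG f = Some p \<and> PH f = Some q \<and> lex_le q p"
    and inv_H: "\<forall>f\<in>EH - RH. \<exists>q. PH f = Some q \<and> lex_le q c"
    using inv SG SH by (simp_all add: ht_dominated_def)
  have "RG \<subseteq> E" using assms(3) SG by simp
  then have "RH \<subseteq> E" using \<open>RH \<subseteq> RG\<close> by (rule order_trans[rotated])
  have "fst (fill_step r i v (RH, PH)) \<subseteq> fst (fill_step r i v (RG, PG))"
    using fill_step_remaining_mono[OF lin fin \<open>RG \<subseteq> E\<close> \<open>RH \<subseteq> RG\<close>] .
  then have RH': "RH' \<subseteq> RG'" using G' H' by simp
  have PG': "PG' = (\<lambda>f. if f \<in> RG - RG' then Some (i, v) else PG f)"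
    using fill_step_assigns[OF lin fin \<open>RG \<subseteq> E\<close> G'] .
  have PH': "PH' = (\<lambda>f. if f \<in> RH - RH' then Some (i, v) else PH f)"
    using fill_step_assigns[OF lin fin \<open>RH \<subseteq> E\<close> H'] .
  have placed_H: "\<exists>q. PH' f = Some q \<and> lex_le q (i, v)" if "f \<in> EH - RH'" for f
  proof (cases "f \<in> RH")
    case True
    then show ?thesis using that PH' lex_le_refl by simp
  next
    case False
    then have "f \<in> EH - RH" using that by simp
    then obtain q where "PH f = Some q" "lex_le q c" using inv_H by blast
    then show ?thesis using False PH' lex_le_trans[OF _ assms(5)] by auto
  qed
  have placed_G: "\<exists>p q. PG' f = Some p \<and> PH' f = Some q \<and> lex_le q p" if "f \<in> EH - RG'" for f
  proof (cases "f \<in> RG")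
    case True
    have "f \<in> EH - RH'" using that RH' by blast
    then obtain q where "PH' f = Some q" "lex_le q (i, v)" using placed_H by blast
    moreover have "PG' f = Some (i, v)" using True that PG' by simp
    ultimately show ?thesis by blast
  next
    case False
    then have "f \<notin> RH" using \<open>RH \<subseteq> RG\<close> by blast
    then show ?thesis using False that inv_G PG' PH' by simp
  qed
  show ?thesis
    unfolding SG SH G' H' ht_dominated_def fst_conv snd_conv using RH' placed_G placed_H by simp
qed

lemma fold_fill_step_dominated:
  assumes lin: "linear_order_on E r" and fin: "finite E"
  shows "fst SG \<subseteq> E \<Longrightarrow> ht_dominated EH c SG SH \<Longrightarrow> sorted vs \<Longrightarrow> \<forall>w\<in>set vs. lex_le c (i, w) \<Longrightarrow>
    fst c \<le> i \<Longrightarrow> \<exists>c'. fst c' \<le> i \<and>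
      ht_dominated EH c' (fold (fill_step r i) vs SG) (fold (fill_step r i) vs SH)"
proof (induction vs arbitrary: c SG SH)
  case (Cons v vs)
  have "ht_dominated EH (i, v) (fill_step r i v SG) (fill_step r i v SH)"
    using fill_step_dominated[OF lin fin Cons(2,3)] Cons(5) by simp
  moreover have "fst (fill_step r i v SG) \<subseteq> E" using fill_step_subset[of r i v SG] Cons(2) by (rule order_trans)
  moreover have "\<forall>w\<in>set vs. lex_le (i, v) (i, w)" using Cons(4) by (simp add: lex_le_def)
  ultimately show ?case using Cons(1)[of "fill_step r i v SG" "(i, v)"] Cons(4) by simp
qed auto

lemma ht_rows_dominated:
  assumes lin: "linear_order_on E r" and fin: "finite E" and "EH \<subseteq> E" and "sorted vs"
  shows "\<exists>c. fst c \<le> n \<and> ht_dominated EH c (ht_rows r vs n E Map.empty) (ht_rows r vs n EH Map.empty)"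
proof (induction n)
  case 0
  have "ht_dominated EH (0, undefined) (E, Map.empty) (EH, Map.empty)"
    using assms(3) by (auto simp: ht_dominated_def)
  then show ?case by auto
next
  case (Suc n)
  then obtain c where "fst c \<le> n"
    and "ht_dominated EH c (ht_rows r vs n E Map.empty) (ht_rows r vs n EH Map.empty)" by blast
  moreover have "\<forall>w\<in>set vs. lex_le c (Suc n, w)" using \<open>fst c \<le> n\<close> by (simp add: lex_le_def)
  ultimately show ?case
    using fold_fill_step_dominated[OF lin fin ht_rows_subset _ \<open>sorted vs\<close>] by (simp add: ht_rows_Suc)
qed

lemma simple_graph_finite_edges: "simple_graph V E \<Longrightarrow> finite E"
  unfolding simple_graph_def by (metis (no_types, lifting) PowI empty_subsetI finite_Pow_iff
      finite_subset insert_subset subsetI)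

lemma simple_graph_edge_meets_vertices: "simple_graph V E \<Longrightarrow> f \<in> E \<Longrightarrow> f \<inter> V \<noteq> {}"
  unfolding simple_graph_def by blast

theorem lemma3p8:
  fixes V :: "'v::linorder set" and E EH :: "'v set set" and r :: "('v set \<times> 'v set) set"
    and e :: "'v set"
  assumes "simple_graph V E"
    and "linear_order_on E r"
    and "EH \<subseteq> E"
    and "e \<in> EH"
  shows "lex_le (ht V EH (r \<inter> (EH \<times> EH)) e) (ht V E r e)"
proof -
  define vs where "vs = sorted_list_of_set V"
  have "finite E" using assms(1) by (rule simple_graph_finite_edges)
  have "sorted vs" and "set vs = V"
    using assms(1) by (simp_all add: vs_def simple_graph_def)
  then have meets: "\<forall>f\<in>E. f \<inter> set vs \<noteq> {}"
    using simple_graph_edge_meets_vertices[OF assms(1)] by simp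
  obtain c where "ht_dominated EH c (ht_rows r vs (card E) E Map.empty) (ht_rows r vs (card E) EH Map.empty)"
    using ht_rows_dominated[OF assms(2) \<open>finite E\<close> assms(3) \<open>sorted vs\<close>] by blast
  moreover have "fst (ht_rows r vs (card E) E Map.empty) = {}"
    using ht_rows_exhausted[OF assms(2) \<open>finite E\<close> _ meets] by simp
  ultimately obtain p q where pq: "snd (ht_rows r vs (card E) E Map.empty) e = Some p"
    "snd (ht_rows r vs (card E) EH Map.empty) e = Some q" "lex_le q p"
    using assms(4) unfolding ht_dominated_def by blast
  have "ht_rows r vs (card E) EH Map.empty = ht_rows r vs (card EH) EH Map.empty"
    using ht_rows_card_le_stable[OF assms(2) \<open>finite E\<close> assms(3)] meets assms(3)
      card_mono[OF \<open>finite E\<close> assms(3)] by blast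
  then have "ht V EH (r \<inter> (EH \<times> EH)) e = q"
    using pq(2) ht_rows_restrict_order[of EH EH r] by (simp add: ht_def vs_def)
  moreover have "ht V E r e = p" using pq(1) by (simp add: ht_def vs_def)
  ultimately show ?thesis using pq(3) by simp
qed

end
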